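(* Let $k\ge 2$, let $H_0$ be a finite $k$-uniform hypergraph and let $(H_t)_{t\ge0}$ be the ILTH hypergraphs generated from $H_0$. The number of hypertriangles in $H_t$ is $\Theta\left(\left((k-1)^3+3(k-1)\right)^t\right)$.
   Context: A $k$-uniform hypergraph has every hyperedge a $k$-element subset of the vertex set. The ILTH process: given $H_t$, form $H_{t+1}$ by adding for each vertex $x\in V(H_t)$ a new vertex $x'$ (its clone), and taking $E(H_{t+1})=E(H_t)\cup\{(e\setminus\{x\})\cup\{x'\} : e\in E(H_t),\ x\in e\}$. A hypertriangle is a 6-tuple $(u,e_1,v,e_2,w,e_3)$ with $u,v,w$ distinct vertices, $e_1,e_2,e_3$ distinct hyperedges, $u,v\in e_1$, $v,w\in e_2$, $w,u\in e_3$. Asymptotics are as $t\to\infty$ with $k$ and $H_0$ fixed. *)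

theory Defs
  imports Complex_Main "HOL-Library.Landau_Symbols"
begin

type_synonym 'v hypergraph = "'v set \<times> 'v set set"

definition k_uniform_hypergraph :: "nat \<Rightarrow> 'v hypergraph \<Rightarrow> bool" where
  "k_uniform_hypergraph k H \<longleftrightarrow> (\<forall>e\<in>snd H. e \<subseteq> fst H \<and> card e = k)"

text \<open>Vertices of the ILTH hypergraphs: an original vertex of H_0 together with a
  history of clonings. The clone of vertex (x, bs) created at step t is (x, t # bs);
  vertices present in H_t only contain step labels < t, so clones are fresh.\<close>
type_synonym 'a ilth_vertex = "'a \<times> nat list"

definition clone :: "nat \<Rightarrow> 'a ilth_vertex \<Rightarrow> 'a ilth_vertex" where
  "clone t v = (fst v, t # snd v)"

definition ilth_step :: "nat \<Rightarrow> 'a ilth_vertex hypergraph \<Rightarrow> 'a ilth_vertex hypergraph" where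
  "ilth_step t H =
     (fst H \<union> clone t ` fst H,
      snd H \<union> {insert (clone t x) (e - {x}) | e x. e \<in> snd H \<and> x \<in> e})"

fun ilth :: "'a hypergraph \<Rightarrow> nat \<Rightarrow> 'a ilth_vertex hypergraph" where
  "ilth H 0 = ((\<lambda>x. (x, [])) ` fst H, (\<lambda>e. (\<lambda>x. (x, [])) ` e) ` snd H)"
| "ilth H (Suc t) = ilth_step t (ilth H t)"

definition hypertriangles :: "'v hypergraph \<Rightarrow> ('v \<times> 'v set \<times> 'v \<times> 'v set \<times> 'v \<times> 'v set) set" where
  "hypertriangles H = {(u, e1, v, e2, w, e3).
      u \<in> fst H \<and> v \<in> fst H \<and> w \<in> fst H \<and> u \<noteq> v \<and> v \<noteq> w \<and> w \<noteq> u \<and>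
      e1 \<in> snd H \<and> e2 \<in> snd H \<and> e3 \<in> snd H \<and> e1 \<noteq> e2 \<and> e2 \<noteq> e3 \<and> e3 \<noteq> e1 \<and>
      u \<in> e1 \<and> v \<in> e1 \<and> v \<in> e2 \<and> w \<in> e2 \<and> w \<in> e3 \<and> u \<in> e3}"

end

theory Submission
  imports Defs
begin

text \<open>
  Call a closed walk \<open>(u, e1, v, e2, w, e3)\<close> with distinct vertices, but possibly repeated
  edges, a triangle walk. Every triangle walk of \<open>H\<^sub>t\<^sub>+\<^sub>1\<close> contains at most one clone,
  since any two of its vertices share an edge and no edge contains two clones. Removing that
  clone, and the clones inside the edges, projects it to a triangle walk of \<open>H\<^sub>t\<close>, and each
  triangle walk of \<open>H\<^sub>t\<close> has exactly \<open>c = (k-1)\<^sup>3 + 3(k-1)\<close> preimages: if no vertex is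
  cloned, each edge may be kept or have one of its \<open>k-2\<close> other vertices cloned; if one
  vertex is cloned, its two edges are forced and the opposite edge has \<open>k-1\<close> choices. So the
  number of triangle walks is exactly \<open>c\<^sup>t\<close> times the initial one, which bounds the
  hypertriangles from above (walks are counted because distinct edges of \<open>H\<^sub>t\<^sub>+\<^sub>1\<close>
  may project to the same edge of \<open>H\<^sub>t\<close>). Conversely, the preimages of a hypertriangle
  are hypertriangles, so from the first time a hypertriangle exists their number grows at
  least by the factor \<open>c\<close> per step.
\<close>

definition triangle_walks :: "'v hypergraph \<Rightarrow> ('v \<times> 'v set \<times> 'v \<times> 'v set \<times> 'v \<times> 'v set) set" where
  "triangle_walks H = {(u, e1, v, e2, w, e3).
      u \<in> fst H \<and> v \<in> fst H \<and> w \<in> fst H \<and> u \<noteq> v \<and> v \<noteq> w \<and> w \<noteq> u \<and>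
      e1 \<in> snd H \<and> e2 \<in> snd H \<and> e3 \<in> snd H \<and>
      u \<in> e1 \<and> v \<in> e1 \<and> v \<in> e2 \<and> w \<in> e2 \<and> w \<in> e3 \<and> u \<in> e3}"

lemma hypertriangles_subset_triangle_walks: "hypertriangles H \<subseteq> triangle_walks H"
  by (auto simp: hypertriangles_def triangle_walks_def)

definition unclone :: "nat \<Rightarrow> 'a ilth_vertex \<Rightarrow> 'a ilth_vertex" where
  "unclone t v = (case snd v of [] \<Rightarrow> v | i # l \<Rightarrow> if i = t then (fst v, l) else v)"

definition clone_edge :: "nat \<Rightarrow> 'a ilth_vertex \<Rightarrow> 'a ilth_vertex set \<Rightarrow> 'a ilth_vertex set" where
  "clone_edge t x e = insert (clone t x) (e - {x})"

definition edge_variants ::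
    "nat \<Rightarrow> 'a ilth_vertex set \<Rightarrow> 'a ilth_vertex \<Rightarrow> 'a ilth_vertex \<Rightarrow> 'a ilth_vertex set set" where
  "edge_variants t e u v = insert e ((\<lambda>x. clone_edge t x e) ` (e - {u, v}))"

definition children where
  "children t = (\<lambda>(u, e1, v, e2, w, e3).
       (\<lambda>(a, b, c). (u, a, v, b, w, c)) `
         (edge_variants t e1 u v \<times> edge_variants t e2 v w \<times> edge_variants t e3 w u)
     \<union> (\<lambda>b. (clone t u, clone_edge t u e1, v, b, w, clone_edge t u e3)) ` edge_variants t e2 v w
     \<union> (\<lambda>c. (u, clone_edge t v e1, clone t v, clone_edge t v e2, w, c)) ` edge_variants t e3 w u
     \<union> (\<lambda>a. (u, a, v, clone_edge t w e2, clone t w, clone_edge t w e3)) ` edge_variants t e1 u v)"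

definition parent ::
    "nat \<Rightarrow> 'a ilth_vertex \<times> 'a ilth_vertex set \<times> 'a ilth_vertex \<times> 'a ilth_vertex set \<times>
      'a ilth_vertex \<times> 'a ilth_vertex set \<Rightarrow>
     'a ilth_vertex \<times> 'a ilth_vertex set \<times> 'a ilth_vertex \<times> 'a ilth_vertex set \<times>
      'a ilth_vertex \<times> 'a ilth_vertex set" where
  "parent t = (\<lambda>(u, a, v, b, w, c).
     (unclone t u, unclone t ` a, unclone t v, unclone t ` b, unclone t w, unclone t ` c))"

lemma mem_children_iff:
  "q \<in> children t (u, e1, v, e2, w, e3) \<longleftrightarrow>
    (\<exists>a b c. q = (u, a, v, b, w, c) \<and> a \<in> edge_variants t e1 u v \<and>
       b \<in> edge_variants t e2 v w \<and> c \<in> edge_variants t e3 w u) \<or>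
    (\<exists>b. q = (clone t u, clone_edge t u e1, v, b, w, clone_edge t u e3) \<and>
       b \<in> edge_variants t e2 v w) \<or>
    (\<exists>c. q = (u, clone_edge t v e1, clone t v, clone_edge t v e2, w, c) \<and>
       c \<in> edge_variants t e3 w u) \<or>
    (\<exists>a. q = (u, a, v, clone_edge t w e2, clone t w, clone_edge t w e3) \<and>
       a \<in> edge_variants t e1 u v)"
  unfolding children_def prod.case Un_iff image_iff Bex_def mem_Times_iff by force

lemma unclone_clone [simp]: "unclone t (clone t x) = x"
  by (simp add: unclone_def clone_def)

lemma clone_eq_iff [simp]: "clone t x = clone t y \<longleftrightarrow> x = y"
  by (cases x; cases y) (simp add: clone_def)

lemma clone_in_clone_edge [simp]: "clone t x \<in> clone_edge t x e"
  by (simp add: clone_edge_def)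

locale ilth_stage =
  fixes V :: "'a ilth_vertex set" and E :: "'a ilth_vertex set set" and t k :: nat
  assumes finite_V: "finite V"
    and edge_subset: "e \<in> E \<Longrightarrow> e \<subseteq> V"
    and card_edge: "e \<in> E \<Longrightarrow> card e = k"
    and labels_less: "v \<in> V \<Longrightarrow> i \<in> set (snd v) \<Longrightarrow> i < t"
    and k_ge_2: "k \<ge> 2"
begin

lemma finite_edge: "e \<in> E \<Longrightarrow> finite e"
  using edge_subset finite_V finite_subset by blast

lemma clone_notin_V [simp]: "clone t x \<notin> V"
  using labels_less[of "clone t x" t] by (auto simp: clone_def)

lemma clone_neq_old [simp]: "x \<in> V \<Longrightarrow> clone t y \<noteq> x" "x \<in> V \<Longrightarrow> x \<noteq> clone t y"
  using clone_notin_V by metis+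

lemma clone_notin_edge: "e \<in> E \<Longrightarrow> clone t x \<notin> e"
  using edge_subset clone_notin_V by blast

lemma unclone_old [simp]: "v \<in> V \<Longrightarrow> unclone t v = v"
  using labels_less[of v t] by (auto simp: unclone_def split: list.split)

lemma unclone_edge [simp]: "e \<in> E \<Longrightarrow> unclone t ` e = e"
  using edge_subset by (force simp: image_iff)

lemma unclone_clone_edge [simp]: "e \<in> E \<Longrightarrow> x \<in> e \<Longrightarrow> unclone t ` clone_edge t x e = e"
  using edge_subset by (force simp: clone_edge_def image_iff)

lemma clone_in_clone_edge_iff: "e \<in> E \<Longrightarrow> clone t y \<in> clone_edge t x e \<longleftrightarrow> y = x"
  using clone_notin_edge by (auto simp: clone_edge_def)

lemma old_in_clone_edge_iff: "z \<in> V \<Longrightarrow> z \<in> clone_edge t x e \<longleftrightarrow> z \<in> e \<and> z \<noteq> x"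
  by (auto simp: clone_edge_def)

lemma step_vertices_iff: "z \<in> fst (ilth_step t (V, E)) \<longleftrightarrow> z \<in> V \<or> (\<exists>y\<in>V. z = clone t y)"
  by (auto simp: ilth_step_def)

lemma step_edges_iff:
  "a \<in> snd (ilth_step t (V, E)) \<longleftrightarrow> a \<in> E \<or> (\<exists>e\<in>E. \<exists>x\<in>e. a = clone_edge t x e)"
  by (auto simp: ilth_step_def clone_edge_def)

lemma step_edge_one_clone:
  assumes "a \<in> snd (ilth_step t (V, E))" "clone t y \<in> a" "clone t z \<in> a"
  shows "y = z"
  using assms(1) unfolding step_edges_iff
proof (elim disjE bexE)
  assume "a \<in> E"
  then show ?thesis using assms(2) clone_notin_edge by blast
next
  fix e x assume "e \<in> E" "a = clone_edge t x e"
  then show ?thesis using assms(2,3) by (simp add: clone_in_clone_edge_iff)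
qed

lemma clone_edge_in_step: "e \<in> E \<Longrightarrow> x \<in> e \<Longrightarrow> clone_edge t x e \<in> snd (ilth_step t (V, E))"
  unfolding step_edges_iff by blast

lemma edge_variant_in_step:
  assumes "e \<in> E" "u \<in> e" "v \<in> e" "a \<in> edge_variants t e u v"
  shows "a \<in> snd (ilth_step t (V, E)) \<and> u \<in> a \<and> v \<in> a \<and> unclone t ` a = e"
proof -
  have "u \<in> V" "v \<in> V" using assms(1-3) edge_subset by auto
  from assms(4) consider "a = e" | x where "x \<in> e - {u, v}" "a = clone_edge t x e"
    unfolding edge_variants_def by blast
  then show ?thesis
  proof cases
    case 1
    then show ?thesis using assms(1-3) step_edges_iff by simp
  next
    case 2
    then show ?thesis using assms(1-3) \<open>u \<in> V\<close> \<open>v \<in> V\<close> clone_edge_in_step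
      by (auto simp: old_in_clone_edge_iff)
  qed
qed

lemma finite_edge_variants: "e \<in> E \<Longrightarrow> finite (edge_variants t e u v)"
  using finite_edge by (simp add: edge_variants_def)

lemma card_edge_variants:
  assumes "e \<in> E" "u \<in> e" "v \<in> e" "u \<noteq> v"
  shows "card (edge_variants t e u v) = k - 1"
proof -
  have inj: "inj_on (\<lambda>x. clone_edge t x e) (e - {u, v})"
    using assms(1) by (intro inj_onI) (metis clone_in_clone_edge clone_in_clone_edge_iff)
  have "e \<noteq> clone_edge t x e" for x
    using clone_notin_edge[OF assms(1), of x] clone_in_clone_edge[of t x e] by metis
  then have "e \<notin> (\<lambda>x. clone_edge t x e) ` (e - {u, v})" by blast
  then have "card (edge_variants t e u v) = Suc (card (e - {u, v}))"
    using finite_edge[OF assms(1)] by (simp add: edge_variants_def card_image[OF inj])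
  also have "card (e - {u, v}) = k - 2"
    using assms card_edge finite_edge by (simp add: card_Diff_subset)
  finally show ?thesis using k_ge_2 by simp
qed

lemma step_edge_through_old:
  assumes "a \<in> snd (ilth_step t (V, E))" "u \<in> a" "v \<in> a" "u \<in> V" "v \<in> V"
  obtains e where "e \<in> E" "u \<in> e" "v \<in> e" "a \<in> edge_variants t e u v"
  using assms(1) unfolding step_edges_iff
proof (elim disjE bexE)
  assume "a \<in> E"
  then show thesis using assms that by (simp add: edge_variants_def)
next
  fix e x assume "e \<in> E" "x \<in> e" "a = clone_edge t x e"
  then show thesis using assms that by (auto simp: edge_variants_def old_in_clone_edge_iff)
qed

lemma step_edge_through_clone:
  assumes "a \<in> snd (ilth_step t (V, E))" "clone t y \<in> a" "z \<in> a" "z \<in> V"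
  obtains e where "e \<in> E" "y \<in> e" "z \<in> e" "z \<noteq> y" "a = clone_edge t y e"
  using assms(1) unfolding step_edges_iff
proof (elim disjE bexE)
  assume "a \<in> E"
  then show thesis using assms(2) clone_notin_edge by blast
next
  fix e x assume e: "e \<in> E" "x \<in> e" and a: "a = clone_edge t x e"
  have "y = x" using assms(2) e(1) unfolding a by (simp add: clone_in_clone_edge_iff)
  moreover have "z \<in> e \<and> z \<noteq> x" using assms(3,4) unfolding a by (simp add: old_in_clone_edge_iff)
  ultimately show thesis using that e a by blast
qed

lemma card_children:
  assumes "p \<in> triangle_walks (V, E)"
  shows "card (children t p) = (k - 1)^3 + 3 * (k - 1)"
proof -
  obtain u e1 v e2 w e3 where p: "p = (u, e1, v, e2, w, e3)" by (cases p)
  have h: "u \<in> V" "v \<in> V" "w \<in> V" "u \<noteq> v" "v \<noteq> w" "w \<noteq> u" "e1 \<in> E" "e2 \<in> E" "e3 \<in> E"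
     "u \<in> e1" "v \<in> e1" "v \<in> e2" "w \<in> e2" "w \<in> e3" "u \<in> e3"
    using assms unfolding p triangle_walks_def by auto
  define A1 A2 A3 where "A1 = edge_variants t e1 u v" and "A2 = edge_variants t e2 v w"
    and "A3 = edge_variants t e3 w u"
  have fin: "finite A1" "finite A2" "finite A3"
    unfolding A1_def A2_def A3_def using finite_edge_variants h by auto
  have card: "card A1 = k - 1" "card A2 = k - 1" "card A3 = k - 1"
    unfolding A1_def A2_def A3_def using card_edge_variants h by auto
  define B0 where "B0 = (\<lambda>(a, b, c). (u, a, v, b, w, c)) ` (A1 \<times> A2 \<times> A3)"
  define Bu where "Bu = (\<lambda>b. (clone t u, clone_edge t u e1, v, b, w, clone_edge t u e3)) ` A2"
  define Bv where "Bv = (\<lambda>c. (u, clone_edge t v e1, clone t v, clone_edge t v e2, w, c)) ` A3"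
  define Bw where "Bw = (\<lambda>a. (u, a, v, clone_edge t w e2, clone t w, clone_edge t w e3)) ` A1"
  have "children t p = B0 \<union> Bu \<union> Bv \<union> Bw"
    unfolding p children_def B0_def Bu_def Bv_def Bw_def A1_def A2_def A3_def by simp
  moreover have "card B0 = (k - 1)^3"
    unfolding B0_def using fin card
    by (subst card_image) (auto simp: inj_on_def card_cartesian_product power3_eq_cube)
  moreover have "card Bu = k - 1" "card Bv = k - 1" "card Bw = k - 1"
    unfolding Bu_def Bv_def Bw_def using card by (subst card_image; auto simp: inj_on_def)+
  moreover have "B0 \<inter> Bu = {}" "(B0 \<union> Bu) \<inter> Bv = {}" "(B0 \<union> Bu \<union> Bv) \<inter> Bw = {}"
    unfolding B0_def Bu_def Bv_def Bw_def using h(1-3) by auto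
  moreover have "finite B0" "finite Bu" "finite Bv" "finite Bw"
    unfolding B0_def Bu_def Bv_def Bw_def using fin by auto
  ultimately show ?thesis by (simp add: card_Un_disjoint)
qed

lemma children_in_step_triangle_walks:
  assumes "p \<in> triangle_walks (V, E)" "q \<in> children t p"
  shows "q \<in> triangle_walks (ilth_step t (V, E)) \<and> parent t q = p"
proof -
  obtain u e1 v e2 w e3 where p: "p = (u, e1, v, e2, w, e3)" by (cases p)
  have h: "u \<in> V" "v \<in> V" "w \<in> V" "u \<noteq> v" "v \<noteq> w" "w \<noteq> u" "e1 \<in> E" "e2 \<in> E" "e3 \<in> E"
     "u \<in> e1" "v \<in> e1" "v \<in> e2" "w \<in> e2" "w \<in> e3" "u \<in> e3"
    using assms(1) unfolding p triangle_walks_def by auto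
  have step_vertices: "x \<in> fst (ilth_step t (V, E))" "clone t x \<in> fst (ilth_step t (V, E))"
    if "x \<in> V" for x
    using that step_vertices_iff by auto
  note variants = edge_variant_in_step[OF h(7,10,11)] edge_variant_in_step[OF h(8,12,13)]
    edge_variant_in_step[OF h(9,14,15)]
  note cloned = clone_edge_in_step[OF h(7,10)] clone_edge_in_step[OF h(7,11)]
    clone_edge_in_step[OF h(8,12)] clone_edge_in_step[OF h(8,13)]
    clone_edge_in_step[OF h(9,14)] clone_edge_in_step[OF h(9,15)]
  from assms(2) show ?thesis
    unfolding p mem_children_iff
    using h step_vertices variants cloned
    by (elim disjE exE conjE) (auto simp: triangle_walks_def parent_def old_in_clone_edge_iff)
qed

lemma step_triangle_walk_cases:
  assumes "(u, a, v, b, w, c) \<in> triangle_walks (ilth_step t (V, E))"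
  obtains (no_clone) "u \<in> V" "v \<in> V" "w \<in> V"
    | (clone_u) y where "u = clone t y" "v \<in> V" "w \<in> V"
    | (clone_v) y where "v = clone t y" "u \<in> V" "w \<in> V"
    | (clone_w) y where "w = clone t y" "u \<in> V" "v \<in> V"
proof -
  let ?E' = "snd (ilth_step t (V, E))"
  have m: "u \<in> fst (ilth_step t (V, E))" "v \<in> fst (ilth_step t (V, E))"
    "w \<in> fst (ilth_step t (V, E))" "a \<in> ?E'" "b \<in> ?E'" "c \<in> ?E'"
    "u \<in> a" "v \<in> a" "v \<in> b" "w \<in> b" "w \<in> c" "u \<in> c" "u \<noteq> v" "v \<noteq> w" "w \<noteq> u"
    using assms unfolding triangle_walks_def by auto
  have old_or_clone: "x \<in> V \<or> (\<exists>y. x = clone t y)" if "x \<in> fst (ilth_step t (V, E))" for x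
    using that step_vertices_iff by auto
  have one_clone: "\<not> ((\<exists>y. x = clone t y) \<and> (\<exists>y. x' = clone t y))"
    if "e \<in> ?E'" "x \<in> e" "x' \<in> e" "x \<noteq> x'" for x x' e
    using that step_edge_one_clone by blast
  show thesis
    using old_or_clone[OF m(1)] old_or_clone[OF m(2)] old_or_clone[OF m(3)]
      one_clone[OF m(4,7,8,13)] one_clone[OF m(5,9,10,14)] one_clone[OF m(6,11,12,15)] that
    by blast
qed

lemma step_triangle_walk_in_children_of_parent:
  assumes "(u, a, v, b, w, c) \<in> triangle_walks (ilth_step t (V, E))"
  shows "parent t (u, a, v, b, w, c) \<in> triangle_walks (V, E) \<and>
    (u, a, v, b, w, c) \<in> children t (parent t (u, a, v, b, w, c))"
proof -
  let ?E' = "snd (ilth_step t (V, E))"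
  have h: "u \<noteq> v" "v \<noteq> w" "w \<noteq> u" "a \<in> ?E'" "b \<in> ?E'" "c \<in> ?E'"
     "u \<in> a" "v \<in> a" "v \<in> b" "w \<in> b" "w \<in> c" "u \<in> c"
    using assms unfolding triangle_walks_def by auto
  from assms show ?thesis
  proof (cases rule: step_triangle_walk_cases)
    case no_clone
    obtain e1 where e1: "e1 \<in> E" "u \<in> e1" "v \<in> e1" "a \<in> edge_variants t e1 u v"
      using step_edge_through_old[OF h(4,7,8)] no_clone by blast
    obtain e2 where e2: "e2 \<in> E" "v \<in> e2" "w \<in> e2" "b \<in> edge_variants t e2 v w"
      using step_edge_through_old[OF h(5,9,10)] no_clone by blast
    obtain e3 where e3: "e3 \<in> E" "w \<in> e3" "u \<in> e3" "c \<in> edge_variants t e3 w u"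
      using step_edge_through_old[OF h(6,11,12)] no_clone by blast
    have "parent t (u, a, v, b, w, c) = (u, e1, v, e2, w, e3)"
      using no_clone edge_variant_in_step[OF e1] edge_variant_in_step[OF e2] edge_variant_in_step[OF e3]
      by (simp add: parent_def)
    moreover have "(u, e1, v, e2, w, e3) \<in> triangle_walks (V, E)"
      using no_clone h(1-3) e1 e2 e3 by (simp add: triangle_walks_def)
    moreover have "(u, a, v, b, w, c) \<in> children t (u, e1, v, e2, w, e3)"
      using e1 e2 e3 unfolding mem_children_iff by blast
    ultimately show ?thesis by simp
  next
    case (clone_u y)
    obtain e1 where e1: "e1 \<in> E" "y \<in> e1" "v \<in> e1" "v \<noteq> y" "a = clone_edge t y e1"
      using step_edge_through_clone[OF h(4) h(7)[unfolded clone_u(1)] h(8)] clone_u by blast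
    obtain e2 where e2: "e2 \<in> E" "v \<in> e2" "w \<in> e2" "b \<in> edge_variants t e2 v w"
      using step_edge_through_old[OF h(5,9,10)] clone_u by blast
    obtain e3 where e3: "e3 \<in> E" "y \<in> e3" "w \<in> e3" "w \<noteq> y" "c = clone_edge t y e3"
      using step_edge_through_clone[OF h(6) h(12)[unfolded clone_u(1)] h(11)] clone_u by blast
    have "parent t (u, a, v, b, w, c) = (y, e1, v, e2, w, e3)"
      using clone_u e1 e3 edge_variant_in_step[OF e2(1-4)] by (simp add: parent_def)
    moreover have "(y, e1, v, e2, w, e3) \<in> triangle_walks (V, E)"
      using clone_u h(2) e1 e2 e3 edge_subset by (auto simp: triangle_walks_def)
    moreover have "(u, a, v, b, w, c) \<in> children t (y, e1, v, e2, w, e3)"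
      using clone_u e1 e2 e3 unfolding mem_children_iff by blast
    ultimately show ?thesis by simp
  next
    case (clone_v y)
    obtain e1 where e1: "e1 \<in> E" "y \<in> e1" "u \<in> e1" "u \<noteq> y" "a = clone_edge t y e1"
      using step_edge_through_clone[OF h(4) h(8)[unfolded clone_v(1)] h(7)] clone_v by blast
    obtain e2 where e2: "e2 \<in> E" "y \<in> e2" "w \<in> e2" "w \<noteq> y" "b = clone_edge t y e2"
      using step_edge_through_clone[OF h(5) h(9)[unfolded clone_v(1)] h(10)] clone_v by blast
    obtain e3 where e3: "e3 \<in> E" "w \<in> e3" "u \<in> e3" "c \<in> edge_variants t e3 w u"
      using step_edge_through_old[OF h(6,11,12)] clone_v by blast
    have "parent t (u, a, v, b, w, c) = (u, e1, y, e2, w, e3)"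
      using clone_v e1 e2 edge_variant_in_step[OF e3(1-4)] by (simp add: parent_def)
    moreover have "(u, e1, y, e2, w, e3) \<in> triangle_walks (V, E)"
      using clone_v h(3) e1 e2 e3 edge_subset by (auto simp: triangle_walks_def)
    moreover have "(u, a, v, b, w, c) \<in> children t (u, e1, y, e2, w, e3)"
      using clone_v e1 e2 e3 unfolding mem_children_iff by blast
    ultimately show ?thesis by simp
  next
    case (clone_w y)
    obtain e1 where e1: "e1 \<in> E" "u \<in> e1" "v \<in> e1" "a \<in> edge_variants t e1 u v"
      using step_edge_through_old[OF h(4,7,8)] clone_w by blast
    obtain e2 where e2: "e2 \<in> E" "y \<in> e2" "v \<in> e2" "v \<noteq> y" "b = clone_edge t y e2"
      using step_edge_through_clone[OF h(5) h(10)[unfolded clone_w(1)] h(9)] clone_w by blast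
    obtain e3 where e3: "e3 \<in> E" "y \<in> e3" "u \<in> e3" "u \<noteq> y" "c = clone_edge t y e3"
      using step_edge_through_clone[OF h(6) h(11)[unfolded clone_w(1)] h(12)] clone_w by blast
    have "parent t (u, a, v, b, w, c) = (u, e1, v, e2, y, e3)"
      using clone_w e2 e3 edge_variant_in_step[OF e1(1-4)] by (simp add: parent_def)
    moreover have "(u, e1, v, e2, y, e3) \<in> triangle_walks (V, E)"
      using clone_w h(1) e1 e2 e3 edge_subset by (auto simp: triangle_walks_def)
    moreover have "(u, a, v, b, w, c) \<in> children t (u, e1, v, e2, y, e3)"
      using clone_w e1 e2 e3 unfolding mem_children_iff by blast
    ultimately show ?thesis by simp
  qed
qed

lemma finite_triangle_walks: "finite (triangle_walks (V, E))"
proof -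
  have "finite E"
    using edge_subset finite_V by (meson Pow_iff finite_Pow_iff finite_subset subsetI)
  moreover have "triangle_walks (V, E) \<subseteq> V \<times> E \<times> V \<times> E \<times> V \<times> E"
    by (auto simp: triangle_walks_def)
  ultimately show ?thesis using finite_V by (auto intro: finite_subset)
qed

lemma card_Union_children:
  assumes "P \<subseteq> triangle_walks (V, E)"
  shows "card (\<Union>p\<in>P. children t p) = ((k - 1)^3 + 3 * (k - 1)) * card P"
proof -
  have card: "card (children t p) = (k - 1)^3 + 3 * (k - 1)" if "p \<in> P" for p
    using that assms card_children by blast
  moreover have "(k - 1)^3 + 3 * (k - 1) > 0" using k_ge_2 by simp
  ultimately have "finite (children t p)" if "p \<in> P" for p
    using that card_gt_0_iff by metis
  moreover have "children t p \<inter> children t p' = {}" if "p \<in> P" "p' \<in> P" "p \<noteq> p'" for p p'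
    using that assms children_in_step_triangle_walks by blast
  moreover have "finite P" using assms finite_triangle_walks finite_subset by blast
  ultimately have "card (\<Union>p\<in>P. children t p) = (\<Sum>p\<in>P. card (children t p))"
    by (intro card_UN_disjoint) auto
  then show ?thesis using card by simp
qed

lemma card_step_triangle_walks:
  "card (triangle_walks (ilth_step t (V, E))) = ((k - 1)^3 + 3 * (k - 1)) * card (triangle_walks (V, E))"
proof -
  have "triangle_walks (ilth_step t (V, E)) = (\<Union>p\<in>triangle_walks (V, E). children t p)"
  proof
    show "triangle_walks (ilth_step t (V, E)) \<subseteq> (\<Union>p\<in>triangle_walks (V, E). children t p)"
      using step_triangle_walk_in_children_of_parent by fast
    show "(\<Union>p\<in>triangle_walks (V, E). children t p) \<subseteq> triangle_walks (ilth_step t (V, E))"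
      using children_in_step_triangle_walks by blast
  qed
  then show ?thesis using card_Union_children by simp
qed

lemma card_clone_edge: "e \<in> E \<Longrightarrow> x \<in> e \<Longrightarrow> card (clone_edge t x e) = k"
  using finite_edge clone_notin_edge card_edge k_ge_2 by (simp add: clone_edge_def)

lemma step_stage: "ilth_stage (fst (ilth_step t (V, E))) (snd (ilth_step t (V, E))) (Suc t) k"
proof
  show "finite (fst (ilth_step t (V, E)))" using finite_V by (simp add: ilth_step_def)
  have "fst (ilth_step t (V, E)) = V \<union> clone t ` V" by (simp add: ilth_step_def)
  then show "e \<subseteq> fst (ilth_step t (V, E))" if "e \<in> snd (ilth_step t (V, E))" for e
    using that edge_subset unfolding step_edges_iff clone_edge_def by blast
  show "card e = k" if "e \<in> snd (ilth_step t (V, E))" for e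
    using that card_edge card_clone_edge unfolding step_edges_iff by blast
  show "i < Suc t" if "v \<in> fst (ilth_step t (V, E))" "i \<in> set (snd v)" for v i
  proof -
    from that(1) consider "v \<in> V" | y where "y \<in> V" "v = clone t y"
      unfolding step_vertices_iff by blast
    then show ?thesis
    proof cases
      case 1
      then show ?thesis using labels_less that(2) by fastforce
    next
      case 2
      then show ?thesis using labels_less[OF 2(1)] that(2) by (fastforce simp: clone_def)
    qed
  qed
  show "2 \<le> k" by (rule k_ge_2)
qed

lemma children_of_hypertriangle_in_step:
  assumes "p \<in> hypertriangles (V, E)" "q \<in> children t p"
  shows "q \<in> hypertriangles (ilth_step t (V, E))"
proof -
  obtain u a v b w c where q: "q = (u, a, v, b, w, c)" by (cases q)
  have walk: "q \<in> triangle_walks (ilth_step t (V, E))" and "parent t q \<in> hypertriangles (V, E)"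
    using assms hypertriangles_subset_triangle_walks children_in_step_triangle_walks by blast+
  then have "unclone t ` a \<noteq> unclone t ` b \<and> unclone t ` b \<noteq> unclone t ` c \<and>
      unclone t ` c \<noteq> unclone t ` a"
    by (simp add: q parent_def hypertriangles_def)
  then have "a \<noteq> b \<and> b \<noteq> c \<and> c \<noteq> a" by blast
  then show ?thesis using walk by (simp add: q triangle_walks_def hypertriangles_def)
qed

lemma card_step_hypertriangles:
  "((k - 1)^3 + 3 * (k - 1)) * card (hypertriangles (V, E)) \<le> card (hypertriangles (ilth_step t (V, E)))"
proof -
  have "finite (hypertriangles (ilth_step t (V, E)))"
    using ilth_stage.finite_triangle_walks[OF step_stage] hypertriangles_subset_triangle_walks
    by (metis finite_subset prod.collapse)
  moreover have "(\<Union>p\<in>hypertriangles (V, E). children t p) \<subseteq> hypertriangles (ilth_step t (V, E))"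
    using children_of_hypertriangle_in_step by blast
  ultimately show ?thesis
    using card_Union_children[OF hypertriangles_subset_triangle_walks] card_mono by metis
qed

end

lemma ilth_stage_ilth:
  assumes "k \<ge> 2" "finite (fst H0)" "k_uniform_hypergraph k H0"
  shows "ilth_stage (fst (ilth H0 t)) (snd (ilth H0 t)) t k"
proof (induction t)
  case 0
  have "inj_on (\<lambda>x. (x, [] :: nat list)) A" for A :: "'a set" by (auto simp: inj_on_def)
  then show ?case
    using assms unfolding k_uniform_hypergraph_def
    by unfold_locales (auto simp: card_image)
next
  case (Suc t)
  then show ?case using ilth_stage.step_stage[OF Suc] by simp
qed

lemma geometric_growth_bigtheta:
  fixes f :: "nat \<Rightarrow> real" and c B :: real
  assumes "c > 0" and grow: "\<And>n. c * f n \<le> f (Suc n)" and bound: "\<And>n. f n \<le> B * c ^ n"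
    and "f s > 0"
  shows "f \<in> \<Theta>(\<lambda>n. c ^ n)"
proof -
  have lower: "c ^ m * f s \<le> f (s + m)" for m
  proof (induction m)
    case (Suc m)
    have "c ^ Suc m * f s = c * (c ^ m * f s)" by simp
    also have "\<dots> \<le> c * f (s + m)" using Suc \<open>c > 0\<close> by simp
    also have "\<dots> \<le> f (s + Suc m)" using grow by simp
    finally show ?case .
  qed simp
  have "0 < B * c ^ s" using assms(4) bound[of s] by linarith
  then have "B > 0" using \<open>c > 0\<close> by (simp add: zero_less_mult_iff)
  show ?thesis
  proof (rule bigthetaI'[of "f s / c ^ s" B])
    show "0 < f s / c ^ s" "0 < B" using assms \<open>B > 0\<close> by auto
    show "\<forall>\<^sub>F n in at_top. f s / c ^ s * norm (c ^ n) \<le> norm (f n) \<and> norm (f n) \<le> B * norm (c ^ n)"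
    proof (rule eventually_at_top_linorderI[of s])
      fix n assume "n \<ge> s"
      then obtain m where n: "n = s + m" using le_Suc_ex by blast
      have "f s / c ^ s * norm (c ^ n) = c ^ m * f s"
        using \<open>c > 0\<close> unfolding n by (simp add: power_add)
      moreover have "c ^ m * f s > 0" using assms by simp
      ultimately show "f s / c ^ s * norm (c ^ n) \<le> norm (f n) \<and> norm (f n) \<le> B * norm (c ^ n)"
        using lower[of m] bound[of n] \<open>c > 0\<close> unfolding n by simp
    qed
  qed
qed

theorem lemma4p6:
  fixes H0 :: "'a hypergraph" and k :: nat
  assumes "k \<ge> 2"
    and "finite (fst H0)"
    and "k_uniform_hypergraph k H0"
    and "\<exists>t0. hypertriangles (ilth H0 t0) \<noteq> {}"
  shows "(\<lambda>t. real (card (hypertriangles (ilth H0 t))))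
           \<in> \<Theta>(\<lambda>t. (real ((k - 1)^3 + 3 * (k - 1))) ^ t)"
proof -
  define c where "c = (k - 1)^3 + 3 * (k - 1)"
  define T where "T t = card (hypertriangles (ilth H0 t))" for t
  define W where "W t = card (triangle_walks (ilth H0 t))" for t
  note stage = ilth_stage_ilth[OF assms(1-3)]
  have walks: "W t = c ^ t * W 0" for t
    by (induction t) (use ilth_stage.card_step_triangle_walks[OF stage] in \<open>simp_all add: W_def c_def\<close>)
  have "T t \<le> W t" for t
    unfolding T_def W_def using ilth_stage.finite_triangle_walks[OF stage]
    by (simp add: card_mono hypertriangles_subset_triangle_walks)
  then have bound: "real (T t) \<le> real (W 0) * real c ^ t" for t
    by (metis walks mult.commute of_nat_le_iff of_nat_mult of_nat_power)
  have grow: "real c * real (T t) \<le> real (T (Suc t))" for t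
    using ilth_stage.card_step_hypertriangles[OF stage, of t] unfolding T_def c_def
    by (metis ilth.simps(2) of_nat_le_iff of_nat_mult prod.collapse)
  obtain t0 where "hypertriangles (ilth H0 t0) \<noteq> {}" using assms(4) by blast
  then have "T t0 > 0"
    unfolding T_def using ilth_stage.finite_triangle_walks[OF stage, of t0]
    by (metis card_gt_0_iff finite_subset hypertriangles_subset_triangle_walks prod.collapse)
  moreover have "c > 0" using assms(1) by (simp add: c_def)
  ultimately have "(\<lambda>t. real (T t)) \<in> \<Theta>(\<lambda>t. real c ^ t)"
    by (intro geometric_growth_bigtheta[where B = "real (W 0)" and s = t0]) (simp_all add: grow bound)
  then show ?thesis unfolding T_def c_def .
qed

end
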